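(* Let $m\ge3$, $p\in[m]$, and let $\lambda_1,\lambda_2$ be $\mathbb{Z}_2$-characteristic maps over $P_m$ with $\lambda_1(p)=\lambda_2(p)=\mathbf a$. Then the D-J classes of $\lambda_1$ and $\lambda_2$ are $p$-adjacent if and only if $\lambda_2$ is obtained from $\lambda_1$ by replacing some (possibly none) of the $\mathbf b\mathbf c$-pieces of $\lambda_1$ by their inversions.
   Context: $P_m$ is the simplicial complex on $[m]$ with facets $\{i,i+1\}$ (mod $m$). Write $\mathbf a=(1,0)^T,\mathbf b=(0,1)^T,\mathbf c=(1,1)^T\in\mathbb{Z}_2^2$. A $\mathbb{Z}_2$-characteristic map over $P_m$ is a map $\lambda\colon[m]\to\{\mathbf a,\mathbf b,\mathbf c\}$ with $\lambda(i)\neq\lambda(i+1)$ for all $i$ (mod $m$), i.e. a cyclic word in $\mathbf a,\mathbf b,\mathbf c$ with no two cyclically consecutive equal letters; D-J equivalence means $\lambda'=\phi\circ\lambda$ for some $\phi\in GL(2,\mathbb{Z}_2)$ (equivalently, a permutation of the letters). The $\mathbf b\mathbf c$-pieces of $\lambda$ are the restrictions of $\lambda$ to the maximal cyclic intervals of consecutive vertices of $[m]\setminus\lambda^{-1}(\mathbf a)$; the inversion of a piece exchanges $\mathbf b$ and $\mathbf c$ on it. $p$-adjacency: for a simplicial complex $K$, the wedge $\mathrm{wed}_pK$ replaces vertex $p$ by $p_1,p_2$, its minimal non-faces being those of $K$ not containing $p$ and $(\tau\setminus\{p\})\cup\{p_1,p_2\}$ for minimal non-faces $\tau\ni p$; the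 link of $p_2$ (resp. $p_1$) is identified with $K$ via $p_1\mapsto p$ (resp. $p_2\mapsto p$). The projection of a characteristic map $\Lambda\colon V\to\mathbb{Z}_2^n$ at a vertex $v$ is $w\mapsto[\Lambda(w)]\in\mathbb{Z}_2^n/\langle\Lambda(v)\rangle$ on the link of $v$. Two D-J classes $\lambda_1,\lambda_2$ over $P_m$ are $p$-adjacent if some characteristic map $\Lambda$ over $\mathrm{wed}_pP_m$ (values in $\mathbb{Z}_2^3$, images of faces linearly independent) satisfies $\operatorname{proj}_{p_2}\Lambda\simeq\lambda_1$, $\operatorname{proj}_{p_1}\Lambda\simeq\lambda_2$. *)

theory Defs
  imports "HOL-Analysis.Analysis" "HOL-Library.Z2"
begin

definition va :: "bit^2" where "va = vector [1, 0]"
definition vb :: "bit^2" where "vb = vector [0, 1]"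
definition vc :: "bit^2" where "vc = vector [1, 1]"

(* The simplicial complex P_m on vertex set {0..<m} (vertex i of the paper
   = i-1 here), facets {i, i+1 mod m}; given as the set of all its faces. *)
definition Pm :: "nat \<Rightarrow> nat set set" where
  "Pm m = {\<sigma>. \<exists>i<m. \<sigma> \<subseteq> {i, Suc i mod m}}"

(* Z_2-characteristic map over P_m: cyclic word in a,b,c, no two cyclically
   consecutive letters equal *)
definition z2_char_map_Pm :: "nat \<Rightarrow> (nat \<Rightarrow> bit^2) \<Rightarrow> bool" where
  "z2_char_map_Pm m lam \<longleftrightarrow>
     (\<forall>i<m. lam i \<in> {va, vb, vc} \<and> lam i \<noteq> lam (Suc i mod m))"

definition min_nonfaces :: "'a set \<Rightarrow> 'a set set \<Rightarrow> 'a set set" where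
  "min_nonfaces V K = {\<tau>. \<tau> \<subseteq> V \<and> \<tau> \<notin> K \<and> (\<forall>v\<in>\<tau>. \<tau> - {v} \<in> K)}"

(* Wedge wed_p K: vertex p replaced by p1 = Inr False, p2 = Inr True;
   the other vertices v become Inl v. *)
definition wed_vertices :: "'a set \<Rightarrow> 'a \<Rightarrow> ('a + bool) set" where
  "wed_vertices V p = Inl ` (V - {p}) \<union> {Inr False, Inr True}"

definition wed_min_nonfaces :: "'a set \<Rightarrow> 'a set set \<Rightarrow> 'a \<Rightarrow> ('a + bool) set set" where
  "wed_min_nonfaces V K p =
     {Inl ` \<tau> | \<tau>. \<tau> \<in> min_nonfaces V K \<and> p \<notin> \<tau>} \<union>
     {Inl ` (\<tau> - {p}) \<union> {Inr False, Inr True} | \<tau>. \<tau> \<in> min_nonfaces V K \<and> p \<in> \<tau>}"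

definition wed :: "'a set \<Rightarrow> 'a set set \<Rightarrow> 'a \<Rightarrow> ('a + bool) set set" where
  "wed V K p = {\<sigma>. \<sigma> \<subseteq> wed_vertices V p \<and> (\<forall>\<tau>\<in>wed_min_nonfaces V K p. \<not> \<tau> \<subseteq> \<sigma>)}"

(* identification of K with the link of p2 (q = False: p \<mapsto> p1) resp. of p1
   (q = True: p \<mapsto> p2) *)
definition wed_link_id :: "'a \<Rightarrow> bool \<Rightarrow> 'a \<Rightarrow> 'a + bool" where
  "wed_link_id p q u = (if u = p then Inr q else Inl u)"

(* characteristic map: the images of every face are linearly independent over
   Z_2, i.e. no nonempty subfamily sums to 0 *)
definition is_char_map :: "'v set set \<Rightarrow> ('v \<Rightarrow> bit^'n) \<Rightarrow> bool" where
  "is_char_map K \<Lambda> \<longleftrightarrow> (\<forall>\<sigma>\<in>K. \<forall>T\<subseteq>\<sigma>. T \<noteq> {} \<longrightarrow> (\<Sum>x\<in>T. \<Lambda> x) \<noteq> 0)"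

(* proj_v \<Lambda> (on the link of v, identified with K's vertex set V via \<iota>) is
   D-J equivalent to lam: there is a linear isomorphism
   Z_2^3/<\<Lambda> v> \<rightarrow> Z_2^2 carrying [\<Lambda>(\<iota> u)] to lam u; equivalently a surjective
   Z_2-linear map Z_2^3 \<rightarrow> Z_2^2 with kernel exactly <\<Lambda> v> = {0, \<Lambda> v}.
   (Over Z_2, linearity = additivity.) *)
definition proj_DJ_equiv ::
  "('v \<Rightarrow> bit^3) \<Rightarrow> 'v \<Rightarrow> ('a \<Rightarrow> 'v) \<Rightarrow> 'a set \<Rightarrow> ('a \<Rightarrow> bit^2) \<Rightarrow> bool" where
  "proj_DJ_equiv \<Lambda> v \<iota> V lam \<longleftrightarrow>
     (\<exists>\<psi> :: bit^3 \<Rightarrow> bit^2.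
        (\<forall>x y. \<psi> (x + y) = \<psi> x + \<psi> y) \<and> surj \<psi> \<and>
        (\<forall>x. \<psi> x = 0 \<longleftrightarrow> x = 0 \<or> x = \<Lambda> v) \<and>
        (\<forall>u\<in>V. \<psi> (\<Lambda> (\<iota> u)) = lam u))"

definition p_adjacent :: "nat \<Rightarrow> nat \<Rightarrow> (nat \<Rightarrow> bit^2) \<Rightarrow> (nat \<Rightarrow> bit^2) \<Rightarrow> bool" where
  "p_adjacent m p l1 l2 \<longleftrightarrow>
     (\<exists>\<Lambda> :: nat + bool \<Rightarrow> bit^3.
        is_char_map (wed {0..<m} (Pm m) p) \<Lambda> \<and>
        proj_DJ_equiv \<Lambda> (Inr True) (wed_link_id p False) {0..<m} l1 \<and>
        proj_DJ_equiv \<Lambda> (Inr False) (wed_link_id p True) {0..<m} l2)"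

definition cyc_interval :: "nat \<Rightarrow> nat set \<Rightarrow> bool" where
  "cyc_interval m I \<longleftrightarrow> (\<exists>s<m. \<exists>l. 1 \<le> l \<and> l \<le> m \<and> I = {(s + k) mod m | k. k < l})"

definition bc_pieces :: "nat \<Rightarrow> (nat \<Rightarrow> bit^2) \<Rightarrow> nat set set" where
  "bc_pieces m lam = {I. cyc_interval m I \<and> (\<forall>u\<in>I. lam u \<noteq> va) \<and>
      (\<forall>J. cyc_interval m J \<and> (\<forall>u\<in>J. lam u \<noteq> va) \<and> I \<subseteq> J \<longrightarrow> J = I)}"

definition bc_inv :: "bit^2 \<Rightarrow> bit^2" where
  "bc_inv x = (if x = vb then vc else if x = vc then vb else x)"

end

theory Submission
  imports Defs
begin

text \<open>
A projection of \<open>\<Lambda>\<close> at an apex of the wedge is a linear map \<open>\<int>\<^sub>2\<^sup>3 \<rightarrow> \<int>\<^sub>2\<^sup>2\<close> whose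
kernel is spanned by the image of that apex. If \<open>u \<noteq> p\<close> and \<open>\<lambda>\<^sub>1(u) = \<lambda>\<^sub>1(p)\<close>, then
\<open>\<Lambda>(u) + \<Lambda>(p\<^sub>1)\<close> lies in the kernel of the projection at \<open>p\<^sub>2\<close> (which realises \<open>\<lambda>\<^sub>1\<close>)
and is nonzero because \<open>{u, p\<^sub>1}\<close> is an edge, so it equals \<open>\<Lambda>(p\<^sub>2)\<close>; the projection at
\<open>p\<^sub>1\<close> then gives \<open>\<lambda>\<^sub>2(u) = \<lambda>\<^sub>2(p)\<close>. So \<open>p\<close>-adjacent maps with \<open>\<lambda>\<^sub>1(p) = \<lambda>\<^sub>2(p) = a\<close>
have the same \<open>a\<close>-vertices, and two maps with the same \<open>a\<close>-vertices either agree or differ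
at every vertex of a \<open>bc\<close>-piece, since neighbouring vertices of a piece carry different
letters from \<open>{b, c}\<close>.

Conversely, if the \<open>a\<close>-vertices agree, then \<open>\<lambda>\<^sub>1\<close> and \<open>\<lambda>\<^sub>2\<close> have the same second
coordinates, and \<open>\<Lambda>(u) = (\<lambda>\<^sub>1(u)\<^sub>1, \<lambda>\<^sub>2(u)\<^sub>1, \<lambda>\<^sub>1(u)\<^sub>2)\<close>, \<open>\<Lambda>(p\<^sub>1) = e\<^sub>1\<close>,
\<open>\<Lambda>(p\<^sub>2) = e\<^sub>2\<close> has the projections \<open>\<lambda>\<^sub>1\<close> and \<open>\<lambda>\<^sub>2\<close>. Any map on the wedge whose two
projections are characteristic is itself characteristic: every nonempty face of the wedge is
carried onto a nonempty face of \<open>K\<close> by one of the two link identifications, and the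
corresponding projection sends the face sum to the sum of the projected map over that face.
\<close>

lemma vabc_nth [simp]:
  "va$1 = 1" "va$2 = 0" "vb$1 = 0" "vb$2 = 1" "vc$1 = 1" "vc$2 = 1"
  by (simp_all add: va_def vb_def vc_def)

lemma vec2_eq_iff: "(x::'a^2) = y \<longleftrightarrow> x$1 = y$1 \<and> x$2 = y$2"
  by (auto simp: vec_eq_iff forall_2)

lemma vec3_eq_iff: "(x::'a^3) = y \<longleftrightarrow> x$1 = y$1 \<and> x$2 = y$2 \<and> x$3 = y$3"
  by (auto simp: vec_eq_iff forall_3)

lemma vabc_distinct [simp]:
  "va \<noteq> vb" "va \<noteq> vc" "vb \<noteq> vc" "vb \<noteq> va" "vc \<noteq> va" "vc \<noteq> vb"
  "va \<noteq> 0" "vb \<noteq> 0" "vc \<noteq> 0"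
  by (simp_all add: vec2_eq_iff)

lemma bit_vec_add_self [simp]: "(x::bit^'n) + x = 0"
  by (simp add: vec_eq_iff)

lemma bit_vec_add_eq_0_iff: "(x::bit^'n) + y = 0 \<longleftrightarrow> x = y"
  by (metis add.assoc add.right_neutral bit_vec_add_self)

lemma additive_zero:
  fixes \<psi> :: "'a::monoid_add \<Rightarrow> 'b::cancel_comm_monoid_add"
  assumes "\<forall>x y. \<psi> (x + y) = \<psi> x + \<psi> y"
  shows "\<psi> 0 = 0"
  using assms[rule_format, of 0 0] by (metis add.right_neutral add_left_cancel)

section \<open>Faces of the wedge\<close>

lemma ex_min_nonface_subset:
  "finite \<sigma> \<Longrightarrow> \<sigma> \<subseteq> V \<Longrightarrow> \<sigma> \<notin> K \<Longrightarrow> \<exists>\<tau>\<subseteq>\<sigma>. \<tau> \<in> min_nonfaces V K"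
proof (induction "card \<sigma>" arbitrary: \<sigma> rule: less_induct)
  case less
  show ?case
  proof (cases "\<forall>v\<in>\<sigma>. \<sigma> - {v} \<in> K")
    case True
    then have "\<sigma> \<in> min_nonfaces V K"
      using less.prems unfolding min_nonfaces_def by simp
    then show ?thesis by blast
  next
    case False
    then obtain v where v: "v \<in> \<sigma>" "\<sigma> - {v} \<notin> K" by blast
    have "card (\<sigma> - {v}) < card \<sigma>"
      using card_Diff1_less[OF less.prems(1) v(1)] .
    then obtain \<tau> where "\<tau> \<subseteq> \<sigma> - {v}" "\<tau> \<in> min_nonfaces V K"
      using less.hyps[of "\<sigma> - {v}"] less.prems(1,2) v(2) by blast
    then show ?thesis by blast
  qed
qed

lemma wed_subset_closed: "\<sigma> \<in> wed V K p \<Longrightarrow> T \<subseteq> \<sigma> \<Longrightarrow> T \<in> wed V K p"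
  unfolding wed_def by blast

lemma wed_face_subset_vertices: "T \<in> wed V K p \<Longrightarrow> T \<subseteq> wed_vertices V p"
  by (simp add: wed_def)

lemma Inl_part_wed_vertices:
  "T \<subseteq> wed_vertices V p \<Longrightarrow> {u. Inl u \<in> T} \<subseteq> V - {p}"
  unfolding wed_vertices_def by auto

lemma wed_min_nonface_Inl:
  "\<tau> \<in> min_nonfaces V K \<Longrightarrow> p \<notin> \<tau> \<Longrightarrow> Inl ` \<tau> \<in> wed_min_nonfaces V K p"
  unfolding wed_min_nonfaces_def by (intro UnI1 CollectI exI[of _ \<tau>]) simp

lemma wed_min_nonface_Inr:
  "\<tau> \<in> min_nonfaces V K \<Longrightarrow> p \<in> \<tau> \<Longrightarrow>
    Inl ` (\<tau> - {p}) \<union> {Inr False, Inr True} \<in> wed_min_nonfaces V K p"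
  unfolding wed_min_nonfaces_def by (intro UnI2 CollectI exI[of _ \<tau>]) simp

lemma wed_face_no_min_nonface:
  "T \<in> wed V K p \<Longrightarrow> \<tau> \<in> wed_min_nonfaces V K p \<Longrightarrow> \<not> \<tau> \<subseteq> T"
  unfolding wed_def by blast

lemma Inl_part_of_wed_face:
  assumes "finite V" and T: "T \<in> wed V K p"
  shows "{u. Inl u \<in> T} \<in> K"
proof (rule ccontr)
  let ?L = "{u. Inl u \<in> T}"
  have sub: "?L \<subseteq> V - {p}"
    using Inl_part_wed_vertices[OF wed_face_subset_vertices[OF T]] .
  have "finite ?L" using finite_subset[OF sub] \<open>finite V\<close> by simp
  moreover assume "?L \<notin> K"
  ultimately obtain \<tau> where \<tau>: "\<tau> \<subseteq> ?L" "\<tau> \<in> min_nonfaces V K"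
    using ex_min_nonface_subset sub by blast
  then have "p \<notin> \<tau>" using sub by blast
  have "Inl ` \<tau> \<subseteq> T" using \<tau>(1) by blast
  then show False
    using wed_face_no_min_nonface[OF T wed_min_nonface_Inl[OF \<tau>(2) \<open>p \<notin> \<tau>\<close>]] by blast
qed

lemma Inl_part_of_wed_face_with_edge:
  assumes "finite V" "p \<in> V" and T: "T \<in> wed V K p" "Inr False \<in> T" "Inr True \<in> T"
  shows "insert p {u. Inl u \<in> T} \<in> K"
proof (rule ccontr)
  let ?L = "insert p {u. Inl u \<in> T}"
  have sub: "?L \<subseteq> V"
    using Inl_part_wed_vertices[OF wed_face_subset_vertices[OF T(1)]] \<open>p \<in> V\<close> by blast
  have "finite ?L" using finite_subset[OF sub] \<open>finite V\<close> by simp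
  moreover assume "?L \<notin> K"
  ultimately obtain \<tau> where \<tau>: "\<tau> \<subseteq> ?L" "\<tau> \<in> min_nonfaces V K"
    using ex_min_nonface_subset sub by blast
  show False
  proof (cases "p \<in> \<tau>")
    case True
    have "Inl ` (\<tau> - {p}) \<union> {Inr False, Inr True} \<subseteq> T" using \<tau>(1) T(2,3) by blast
    then show False
      using wed_face_no_min_nonface[OF T(1) wed_min_nonface_Inr[OF \<tau>(2) True]] by blast
  next
    case False
    have "Inl ` \<tau> \<subseteq> T" using \<tau>(1) False by blast
    then show False
      using wed_face_no_min_nonface[OF T(1) wed_min_nonface_Inl[OF \<tau>(2) False]] by blast
  qed
qed

lemma wed_edge_face:
  assumes "{} \<in> K" "{u} \<in> K" "u \<in> V" "u \<noteq> p"
  shows "{Inl u, Inr b} \<in> wed V K p"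
proof -
  have "\<not> \<tau>' \<subseteq> {Inl u, Inr b}" if \<tau>': "\<tau>' \<in> wed_min_nonfaces V K p" for \<tau>'
  proof
    assume sub: "\<tau>' \<subseteq> {Inl u, Inr b}"
    obtain \<tau> where \<tau>: "\<tau> \<in> min_nonfaces V K"
      "\<tau>' = Inl ` \<tau> \<or> \<tau>' = Inl ` (\<tau> - {p}) \<union> {Inr False, Inr True}"
      using \<tau>' unfolding wed_min_nonfaces_def by blast
    from \<tau>(2) show False
    proof
      assume "\<tau>' = Inl ` \<tau>"
      then have "\<tau> \<subseteq> {u}" using sub by auto
      then have "\<tau> \<in> K" using assms(1,2) by (auto simp: subset_singleton_iff)
      then show False using \<tau>(1) unfolding min_nonfaces_def by blast
    next
      assume "\<tau>' = Inl ` (\<tau> - {p}) \<union> {Inr False, Inr True}"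
      then show False using sub by (cases b) auto
    qed
  qed
  moreover have "{Inl u, Inr b} \<subseteq> wed_vertices V p"
    using assms(3,4) unfolding wed_vertices_def by (cases b) auto
  ultimately show ?thesis unfolding wed_def mem_Collect_eq by (intro conjI ballI)
qed

lemma wed_link_id_preimage:
  assumes "T \<subseteq> wed_vertices V p" "p \<in> V"
  shows "{u \<in> V. wed_link_id p q u \<in> T} =
    (if Inr q \<in> T then insert p {u. Inl u \<in> T} else {u. Inl u \<in> T})"
  using assms by (auto simp: wed_link_id_def wed_vertices_def)

lemma wed_face_has_link_face:
  assumes "finite V" "p \<in> V" "{p} \<in> K" and T: "T \<in> wed V K p" "T \<noteq> {}"
  obtains q
  where "{u \<in> V. wed_link_id p q u \<in> T} \<in> K" "{u \<in> V. wed_link_id p q u \<in> T} \<noteq> {}"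
proof -
  let ?L = "{u. Inl u \<in> T}"
  have TV: "T \<subseteq> wed_vertices V p" using wed_face_subset_vertices[OF T(1)] .
  have L: "?L \<in> K" using Inl_part_of_wed_face[OF assms(1) T(1)] .
  have pre: "{u \<in> V. wed_link_id p q u \<in> T} = (if Inr q \<in> T then insert p ?L else ?L)" for q
    using wed_link_id_preimage[OF TV assms(2)] .
  show ?thesis
  proof (cases "?L = {}")
    case True
    then obtain q where "Inr q \<in> T" using TV T(2) unfolding wed_vertices_def by blast
    then show ?thesis using that[of q] pre[of q] True \<open>{p} \<in> K\<close> by simp
  next
    case nonempty: False
    show ?thesis
    proof (cases "Inr False \<in> T \<and> Inr True \<in> T")
      case True
      then show ?thesis
        using that[of True] pre[of True] Inl_part_of_wed_face_with_edge[OF assms(1,2) T(1)] by simp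
    next
      case False
      then obtain q where "Inr q \<notin> T" by blast
      then show ?thesis using that[of q] pre[of q] L nonempty by simp
    qed
  qed
qed

section \<open>Characteristic maps on the wedge\<close>

lemma is_char_mapD: "is_char_map K \<Lambda> \<Longrightarrow> \<sigma> \<in> K \<Longrightarrow> \<sigma> \<noteq> {} \<Longrightarrow> sum \<Lambda> \<sigma> \<noteq> 0"
  unfolding is_char_map_def by blast

lemma sum_wed_link_preimage:
  fixes \<Lambda> :: "'v + bool \<Rightarrow> 'b::comm_monoid_add" and \<psi> :: "'b \<Rightarrow> 'c::cancel_comm_monoid_add"
  assumes add: "\<forall>x y. \<psi> (x + y) = \<psi> x + \<psi> y"
    and "finite V" "p \<in> V" "T \<subseteq> wed_vertices V p"
    and ker: "\<psi> (\<Lambda> (Inr (\<not> q))) = 0" and link: "\<forall>u\<in>V. \<psi> (\<Lambda> (wed_link_id p q u)) = l u"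
  shows "\<psi> (sum \<Lambda> T) = sum l {u \<in> V. wed_link_id p q u \<in> T}"
proof -
  let ?A = "{u \<in> V. wed_link_id p q u \<in> T}"
  have "finite T"
    using finite_subset[OF \<open>T \<subseteq> wed_vertices V p\<close>] \<open>finite V\<close> by (simp add: wed_vertices_def)
  have image: "wed_link_id p q ` ?A = T - {Inr (\<not> q)}"
    using \<open>p \<in> V\<close> \<open>T \<subseteq> wed_vertices V p\<close>
    by (auto simp: wed_link_id_def wed_vertices_def image_iff split: if_splits)
  have inj: "inj (wed_link_id p q)"
    by (rule injI) (auto simp: wed_link_id_def split: if_splits)
  have "\<psi> (sum \<Lambda> T) = sum (\<psi> \<circ> \<Lambda>) T"
    using sum_comp_morphism[of \<psi> \<Lambda> T] additive_zero[OF add] add by simp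
  also have "\<dots> = sum (\<psi> \<circ> \<Lambda>) (T - {Inr (\<not> q)})"
    using sum.mono_neutral_right[OF \<open>finite T\<close>, of "T - {Inr (\<not> q)}" "\<psi> \<circ> \<Lambda>"] ker by auto
  also have "\<dots> = sum (\<psi> \<circ> \<Lambda> \<circ> wed_link_id p q) ?A"
    unfolding image[symmetric] using sum.reindex[OF inj_on_subset[OF inj]] by blast
  also have "\<dots> = sum l ?A"
    using link by (intro sum.cong) auto
  finally show ?thesis .
qed

lemma sum_wed_face_nonzero_if_link_face:
  assumes proj: "proj_DJ_equiv \<Lambda> (Inr (\<not> q)) (wed_link_id p q) V l" and "is_char_map K l"
    and "finite V" "p \<in> V" "T \<subseteq> wed_vertices V p"
    and A: "{u \<in> V. wed_link_id p q u \<in> T} \<in> K" "{u \<in> V. wed_link_id p q u \<in> T} \<noteq> {}"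
  shows "sum \<Lambda> T \<noteq> 0"
proof
  obtain \<psi> :: "bit^3 \<Rightarrow> bit^2" where add: "\<forall>x y. \<psi> (x + y) = \<psi> x + \<psi> y"
    and ker: "\<psi> (\<Lambda> (Inr (\<not> q))) = 0" and link: "\<forall>u\<in>V. \<psi> (\<Lambda> (wed_link_id p q u)) = l u"
    using proj unfolding proj_DJ_equiv_def by blast
  have "sum l {u \<in> V. wed_link_id p q u \<in> T} \<noteq> 0"
    using is_char_mapD[OF \<open>is_char_map K l\<close> A] .
  moreover assume "sum \<Lambda> T = 0"
  ultimately show False
    using sum_wed_link_preimage[OF add assms(3-5) ker link] additive_zero[OF add] by simp
qed

lemma is_char_map_wed_if_projections:
  assumes "finite V" "p \<in> V" "{p} \<in> K" "is_char_map K l1" "is_char_map K l2"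
    and proj1: "proj_DJ_equiv \<Lambda> (Inr True) (wed_link_id p False) V l1"
    and proj2: "proj_DJ_equiv \<Lambda> (Inr False) (wed_link_id p True) V l2"
  shows "is_char_map (wed V K p) \<Lambda>"
  unfolding is_char_map_def
proof (intro ballI allI impI)
  fix \<sigma> T assume \<sigma>: "\<sigma> \<in> wed V K p" and "T \<subseteq> \<sigma>" "T \<noteq> {}"
  have T: "T \<in> wed V K p" using wed_subset_closed[OF \<sigma> \<open>T \<subseteq> \<sigma>\<close>] .
  have TV: "T \<subseteq> wed_vertices V p" using wed_face_subset_vertices[OF T] .
  obtain q where "{u \<in> V. wed_link_id p q u \<in> T} \<in> K" "{u \<in> V. wed_link_id p q u \<in> T} \<noteq> {}"
    using wed_face_has_link_face[OF assms(1-3) T \<open>T \<noteq> {}\<close>] .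
  then show "sum \<Lambda> T \<noteq> 0"
    using sum_wed_face_nonzero_if_link_face[OF _ _ assms(1,2) TV, where q = q]
      proj1 proj2 assms(4,5) by (cases q) simp_all
qed

lemma wed_projections_same_colour_as_p:
  assumes char: "is_char_map (wed V K p) \<Lambda>"
    and proj: "proj_DJ_equiv \<Lambda> (Inr (\<not> q)) (wed_link_id p q) V l"
    and proj': "proj_DJ_equiv \<Lambda> (Inr q) (wed_link_id p (\<not> q)) V l'"
    and "{} \<in> K" "{u} \<in> K" "u \<in> V" "p \<in> V" "l u = l p"
  shows "l' u = l' p"
proof (cases "u = p")
  case False
  obtain \<psi> :: "bit^3 \<Rightarrow> bit^2" where add: "\<And>x y. \<psi> (x + y) = \<psi> x + \<psi> y"
    and ker: "\<And>x. \<psi> x = 0 \<longleftrightarrow> x = 0 \<or> x = \<Lambda> (Inr (\<not> q))"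
    and link: "\<forall>v\<in>V. \<psi> (\<Lambda> (wed_link_id p q v)) = l v"
    using proj unfolding proj_DJ_equiv_def by blast
  obtain \<psi>' :: "bit^3 \<Rightarrow> bit^2" where add': "\<And>x y. \<psi>' (x + y) = \<psi>' x + \<psi>' y"
    and ker': "\<And>x. \<psi>' x = 0 \<longleftrightarrow> x = 0 \<or> x = \<Lambda> (Inr q)"
    and link': "\<forall>v\<in>V. \<psi>' (\<Lambda> (wed_link_id p (\<not> q) v)) = l' v"
    using proj' unfolding proj_DJ_equiv_def by blast
  define w x y where "w = \<Lambda> (Inl u)" and "x = \<Lambda> (Inr q)" and "y = \<Lambda> (Inr (\<not> q))"
  have "\<psi> w = l u" "\<psi> x = l p" "\<psi>' w = l' u" "\<psi>' y = l' p"
    using link link' \<open>u \<in> V\<close> \<open>p \<in> V\<close> False unfolding w_def x_def y_def wed_link_id_def by auto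
  have "sum \<Lambda> {Inl u, Inr q} \<noteq> 0"
    using is_char_mapD[OF char wed_edge_face[OF assms(4-6) False]] by blast
  then have "w + x \<noteq> 0" unfolding w_def x_def by simp
  moreover have "\<psi> (w + x) = 0"
    using add \<open>\<psi> w = l u\<close> \<open>\<psi> x = l p\<close> \<open>l u = l p\<close> by simp
  ultimately have "w + x = y" using ker unfolding y_def by blast
  then have "\<psi>' w + \<psi>' x = l' p" using add' \<open>\<psi>' y = l' p\<close> by metis
  moreover have "\<psi>' x = 0" using ker' unfolding x_def by simp
  ultimately show ?thesis using \<open>\<psi>' w = l' u\<close> by simp
qed simp

definition wedge_lift :: "('a \<Rightarrow> bit^2) \<Rightarrow> ('a \<Rightarrow> bit^2) \<Rightarrow> 'a + bool \<Rightarrow> bit^3" where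
  "wedge_lift l1 l2 t = (case t of
      Inl u \<Rightarrow> vector [l1 u $ 1, l2 u $ 1, l1 u $ 2]
    | Inr q \<Rightarrow> (if q then vector [0, 1, 0] else vector [1, 0, 0]))"

lemma proj_DJ_equiv_wedge_lift_first:
  assumes "l1 p = va"
  shows "proj_DJ_equiv (wedge_lift l1 l2) (Inr True) (wed_link_id p False) V l1"
  unfolding proj_DJ_equiv_def
proof (intro exI[of _ "\<lambda>v. vector [v$1, v$3]"] conjI allI ballI)
  show "surj (\<lambda>v :: bit^3. vector [v$1, v$3] :: bit^2)"
    by (rule surjI[of _ "\<lambda>z. vector [z$1, 0, z$2]"]) (simp add: vec2_eq_iff)
  show "((vector [x$1, x$3] :: bit^2) = 0) = (x = 0 \<or> x = wedge_lift l1 l2 (Inr True))" for x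
    by (auto simp: wedge_lift_def vec2_eq_iff vec3_eq_iff)
  show "(vector [wedge_lift l1 l2 (wed_link_id p False u) $ 1,
                 wedge_lift l1 l2 (wed_link_id p False u) $ 3] :: bit^2) = l1 u" for u
    using assms by (simp add: wedge_lift_def wed_link_id_def vec2_eq_iff)
qed (simp add: vec2_eq_iff)

lemma proj_DJ_equiv_wedge_lift_second:
  assumes "p \<in> V" "l2 p = va" "\<forall>u\<in>V. l2 u $ 2 = l1 u $ 2"
  shows "proj_DJ_equiv (wedge_lift l1 l2) (Inr False) (wed_link_id p True) V l2"
  unfolding proj_DJ_equiv_def
proof (intro exI[of _ "\<lambda>v. vector [v$2, v$3]"] conjI allI ballI)
  show "surj (\<lambda>v :: bit^3. vector [v$2, v$3] :: bit^2)"
    by (rule surjI[of _ "\<lambda>z. vector [0, z$1, z$2]"]) (simp add: vec2_eq_iff)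
  show "((vector [x$2, x$3] :: bit^2) = 0) = (x = 0 \<or> x = wedge_lift l1 l2 (Inr False))" for x
    by (auto simp: wedge_lift_def vec2_eq_iff vec3_eq_iff)
  show "(vector [wedge_lift l1 l2 (wed_link_id p True u) $ 2,
                 wedge_lift l1 l2 (wed_link_id p True u) $ 3] :: bit^2) = l2 u" if "u \<in> V" for u
    using assms that by (simp add: wedge_lift_def wed_link_id_def vec2_eq_iff)
qed (simp add: vec2_eq_iff)

section \<open>Adjacency over \<open>P\<^sub>m\<close> and \<open>bc\<close>-pieces\<close>

lemma Pm_subset_closed: "A \<in> Pm m \<Longrightarrow> B \<subseteq> A \<Longrightarrow> B \<in> Pm m"
  unfolding Pm_def by blast

lemma Pm_singleton: "u < m \<Longrightarrow> {u} \<in> Pm m"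
  unfolding Pm_def by blast

lemma z2_char_map_PmD:
  assumes "z2_char_map_Pm m l" "u < m"
  shows "l u \<in> {va, vb, vc}" "l u \<noteq> l (Suc u mod m)"
  using assms unfolding z2_char_map_Pm_def by auto

lemma is_char_map_Pm:
  assumes "z2_char_map_Pm m l"
  shows "is_char_map (Pm m) l"
  unfolding is_char_map_def
proof (intro ballI allI impI)
  fix \<sigma> T assume "\<sigma> \<in> Pm m" "T \<subseteq> \<sigma>" "T \<noteq> {}"
  then obtain i where i: "i < m" "T \<subseteq> {i, Suc i mod m}" unfolding Pm_def by blast
  define j where "j = Suc i mod m"
  have "j < m" using i(1) unfolding j_def by simp
  have letters: "l i \<in> {va, vb, vc}" "l j \<in> {va, vb, vc}" "l i \<noteq> l j"
    using z2_char_map_PmD[OF assms i(1)] z2_char_map_PmD[OF assms \<open>j < m\<close>] unfolding j_def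
    by auto
  have "T = {i} \<or> T = {j} \<or> T = {i, j}"
    using i(2) \<open>T \<noteq> {}\<close> unfolding j_def[symmetric] by auto
  then show "sum l T \<noteq> 0"
  proof (elim disjE)
    assume "T = {i, j}"
    moreover have "i \<noteq> j" using letters by auto
    ultimately show ?thesis using letters by (simp add: bit_vec_add_eq_0_iff)
  qed (use letters in auto)
qed

lemma nth2_eq_iff_va:
  "x \<in> {va, vb, vc} \<Longrightarrow> y \<in> {va, vb, vc} \<Longrightarrow> x $ 2 = y $ 2 \<longleftrightarrow> (x = va \<longleftrightarrow> y = va)"
  by auto

lemma p_adjacent_iff_same_va:
  assumes "p < m" and char1: "z2_char_map_Pm m l1" and char2: "z2_char_map_Pm m l2"
    and "l1 p = va" "l2 p = va"
  shows "p_adjacent m p l1 l2 \<longleftrightarrow> (\<forall>u<m. l1 u = va \<longleftrightarrow> l2 u = va)"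
proof
  assume "p_adjacent m p l1 l2"
  then obtain \<Lambda> where char: "is_char_map (wed {0..<m} (Pm m) p) \<Lambda>"
    and proj1: "proj_DJ_equiv \<Lambda> (Inr True) (wed_link_id p False) {0..<m} l1"
    and proj2: "proj_DJ_equiv \<Lambda> (Inr False) (wed_link_id p True) {0..<m} l2"
    unfolding p_adjacent_def by blast
  have "{} \<in> Pm m" using Pm_subset_closed[OF Pm_singleton[OF \<open>p < m\<close>]] by blast
  show "\<forall>u<m. l1 u = va \<longleftrightarrow> l2 u = va"
  proof (intro allI impI)
    fix u assume "u < m"
    note colour =
      wed_projections_same_colour_as_p[OF char _ _ \<open>{} \<in> Pm m\<close> Pm_singleton[OF \<open>u < m\<close>]]
    have "l2 u = l2 p" if "l1 u = l1 p"
      by (rule colour[where q = False and l = l1 and l' = l2])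
        (use proj1 proj2 \<open>u < m\<close> \<open>p < m\<close> that in simp_all)
    moreover have "l1 u = l1 p" if "l2 u = l2 p"
      by (rule colour[where q = True and l = l2 and l' = l1])
        (use proj1 proj2 \<open>u < m\<close> \<open>p < m\<close> that in simp_all)
    ultimately show "l1 u = va \<longleftrightarrow> l2 u = va"
      using assms(4,5) by auto
  qed
next
  assume same: "\<forall>u<m. l1 u = va \<longleftrightarrow> l2 u = va"
  have "\<forall>u\<in>{0..<m}. l2 u $ 2 = l1 u $ 2"
    using same nth2_eq_iff_va z2_char_map_PmD(1)[OF char1] z2_char_map_PmD(1)[OF char2] by auto
  then have proj1: "proj_DJ_equiv (wedge_lift l1 l2) (Inr True) (wed_link_id p False) {0..<m} l1"
    and proj2: "proj_DJ_equiv (wedge_lift l1 l2) (Inr False) (wed_link_id p True) {0..<m} l2"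
    using proj_DJ_equiv_wedge_lift_first[of l1 p l2 "{0..<m}"]
      proj_DJ_equiv_wedge_lift_second[of p "{0..<m}" l2 l1] assms(1,4,5) by simp_all
  moreover have "is_char_map (wed {0..<m} (Pm m) p) (wedge_lift l1 l2)"
    by (rule is_char_map_wed_if_projections[OF _ _ Pm_singleton[OF \<open>p < m\<close>]
          is_char_map_Pm[OF char1] is_char_map_Pm[OF char2] proj1 proj2])
      (use \<open>p < m\<close> in simp_all)
  ultimately show "p_adjacent m p l1 l2" unfolding p_adjacent_def by blast
qed

lemma same_va_neighbours_agree_iff:
  assumes char1: "z2_char_map_Pm m l1" and char2: "z2_char_map_Pm m l2"
    and same: "\<forall>u<m. l1 u = va \<longleftrightarrow> l2 u = va"
    and "u < m" "l1 u \<noteq> va" "l1 (Suc u mod m) \<noteq> va"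
  shows "l2 u = l1 u \<longleftrightarrow> l2 (Suc u mod m) = l1 (Suc u mod m)"
proof -
  have "Suc u mod m < m" using \<open>u < m\<close> by simp
  then show ?thesis
    using z2_char_map_PmD[OF char1 \<open>u < m\<close>] z2_char_map_PmD[OF char2 \<open>u < m\<close>]
      z2_char_map_PmD(1)[OF char1 \<open>Suc u mod m < m\<close>]
      z2_char_map_PmD(1)[OF char2 \<open>Suc u mod m < m\<close>]
      same assms(4-6) by auto
qed

lemma same_va_agree_on_cyc_interval:
  assumes char1: "z2_char_map_Pm m l1" and char2: "z2_char_map_Pm m l2"
    and same: "\<forall>u<m. l1 u = va \<longleftrightarrow> l2 u = va"
    and I: "cyc_interval m I" "\<forall>v\<in>I. l1 v \<noteq> va" and "v \<in> I" "w \<in> I"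
  shows "l2 v = l1 v \<longleftrightarrow> l2 w = l1 w"
proof -
  obtain s n where "s < m" and I_eq: "I = {(s + k) mod m | k. k < n}"
    using I(1) unfolding cyc_interval_def by blast
  have "k < n \<Longrightarrow>
    (l2 ((s + k) mod m) = l1 ((s + k) mod m) \<longleftrightarrow> l2 (s mod m) = l1 (s mod m))" for k
  proof (induction k)
    case (Suc k)
    have step: "Suc ((s + k) mod m) mod m = (s + Suc k) mod m" by (simp add: mod_Suc_eq)
    have "(s + k) mod m \<in> I" "(s + Suc k) mod m \<in> I" using Suc.prems I_eq by auto
    moreover have "(s + k) mod m < m" using \<open>s < m\<close> by simp
    ultimately show ?case
      using same_va_neighbours_agree_iff[OF char1 char2 same, of "(s + k) mod m"] I(2) step Suc
      by auto
  qed simp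
  then show ?thesis using \<open>v \<in> I\<close> \<open>w \<in> I\<close> I_eq by auto
qed

lemma bc_piece_containing:
  assumes "u < m" "l u \<noteq> va"
  obtains I where "I \<in> bc_pieces m l" "u \<in> I"
proof -
  let ?F = "{J. cyc_interval m J \<and> (\<forall>v\<in>J. l v \<noteq> va)}"
  have "?F \<subseteq> Pow {0..<m}" unfolding cyc_interval_def by auto
  then have "finite ?F" by (rule finite_subset) simp
  moreover have "{u} \<in> ?F"
  proof -
    have "{u} = {(u + k) mod m | k. k < (1::nat)}" using \<open>u < m\<close> by auto
    then show ?thesis unfolding cyc_interval_def using assms by fastforce
  qed
  ultimately obtain I where "I \<in> ?F" "{u} \<subseteq> I" "\<forall>J\<in>?F. I \<subseteq> J \<longrightarrow> I = J"
    using finite_has_maximal2[of ?F "{u}"] by blast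
  then have "I \<in> bc_pieces m l" "u \<in> I" unfolding bc_pieces_def by auto
  then show ?thesis by (rule that)
qed

lemma bc_inv_eq_va_iff: "bc_inv x = va \<longleftrightarrow> x = va"
  by (auto simp: bc_inv_def)

lemma same_va_iff_bc_pieces_inverted:
  assumes char1: "z2_char_map_Pm m l1" and char2: "z2_char_map_Pm m l2"
  shows "(\<forall>u<m. l1 u = va \<longleftrightarrow> l2 u = va) \<longleftrightarrow>
    (\<exists>S \<subseteq> bc_pieces m l1. \<forall>u<m. l2 u = (if u \<in> \<Union>S then bc_inv (l1 u) else l1 u))"
proof
  assume same: "\<forall>u<m. l1 u = va \<longleftrightarrow> l2 u = va"
  define S where "S = {I \<in> bc_pieces m l1. \<exists>v\<in>I. l2 v \<noteq> l1 v}"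
  have "l2 u = (if u \<in> \<Union>S then bc_inv (l1 u) else l1 u)" if "u < m" for u
  proof (cases "l1 u = va")
    case True
    moreover have "u \<notin> \<Union>S" using True unfolding S_def bc_pieces_def by blast
    ultimately show ?thesis using same \<open>u < m\<close> by (metis (full_types))
  next
    case False
    obtain I where I: "I \<in> bc_pieces m l1" "u \<in> I"
      using bc_piece_containing[of u m l1] \<open>u < m\<close> False by blast
    have "u \<in> \<Union>S \<longleftrightarrow> l2 u \<noteq> l1 u"
    proof
      assume "u \<in> \<Union>S"
      then obtain J v where J: "J \<in> bc_pieces m l1" "u \<in> J" "v \<in> J" "l2 v \<noteq> l1 v"
        unfolding S_def by blast
      have "cyc_interval m J" "\<forall>v\<in>J. l1 v \<noteq> va" using J(1) unfolding bc_pieces_def by auto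
      then show "l2 u \<noteq> l1 u"
        using same_va_agree_on_cyc_interval[OF char1 char2 same _ _ J(2,3)] J(4) by blast
    next
      assume "l2 u \<noteq> l1 u"
      then show "u \<in> \<Union>S" using I unfolding S_def by blast
    qed
    moreover have "l1 u \<in> {vb, vc}" "l2 u \<in> {vb, vc}"
      using z2_char_map_PmD(1)[OF char1 \<open>u < m\<close>] z2_char_map_PmD(1)[OF char2 \<open>u < m\<close>]
        False same \<open>u < m\<close> by auto
    ultimately show ?thesis by (auto simp: bc_inv_def)
  qed
  moreover have "S \<subseteq> bc_pieces m l1" unfolding S_def by blast
  ultimately show
    "\<exists>S \<subseteq> bc_pieces m l1. \<forall>u<m. l2 u = (if u \<in> \<Union>S then bc_inv (l1 u) else l1 u)"
    by blast
next
  assume "\<exists>S \<subseteq> bc_pieces m l1. \<forall>u<m. l2 u = (if u \<in> \<Union>S then bc_inv (l1 u) else l1 u)"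
  then obtain S where "\<forall>u<m. l2 u = (if u \<in> \<Union>S then bc_inv (l1 u) else l1 u)" by blast
  then show "\<forall>u<m. l1 u = va \<longleftrightarrow> l2 u = va"
    by (simp add: bc_inv_eq_va_iff)
qed

theorem mainTheorem3:
  fixes m p :: nat and l1 l2 :: "nat \<Rightarrow> bit^2"
  assumes "m \<ge> 3" and "p < m"
    and "z2_char_map_Pm m l1" and "z2_char_map_Pm m l2"
    and "l1 p = va" and "l2 p = va"
  shows "p_adjacent m p l1 l2 \<longleftrightarrow>
    (\<exists>S \<subseteq> bc_pieces m l1.
       \<forall>u<m. l2 u = (if u \<in> \<Union>S then bc_inv (l1 u) else l1 u))"
  using p_adjacent_iff_same_va[OF assms(2-6)] same_va_iff_bc_pieces_inverted[OF assms(3,4)]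
  by blast

end
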